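(* Let $S$ be a numerical semigroup with $\mathrm{msg}(S)=\{n_1<n_2<\cdots<n_e<n_{e+1}\}$, where $e\geq 2$, and let $S'=\langle n_1,n_2,\ldots,n_e\rangle$ with $\mathrm{Ap}(S',n_1)=\{w'(0),w'(1),\ldots,w'(n_1-1)\}$, where $w'(i)$ is the least element of $S'$ congruent to $i$ modulo $n_1$. Then $S$ is a MANS-semigroup if and only if all of the following hold: (1) $S'$ is a MANS-semigroup; (2) $n_e \bmod n_1 < n_{e+1}\bmod n_1$; (3) $w'(n_{e+1}\bmod n_1-1)<n_{e+1}<w'(n_{e+1}\bmod n_1)$.
   Context: $\mathbb{N}=\{0,1,2,\ldots\}$. A numerical semigroup is a subset $S\subseteq\mathbb{N}$ closed under addition, containing $0$, with $\mathbb{N}\setminus S$ finite. $\langle A\rangle$ denotes the submonoid of $(\mathbb{N},+)$ generated by $A$. $\mathrm{msg}(S)$ is the (unique, finite) minimal system of generators of $S$. The multiplicity $\mathrm{m}(S)$ is the least element of $S\setminus\{0\}$. For $n\in S\setminus\{0\}$, $\mathrm{Ap}(S,n)=\{s\in S: s-n\notin S\}=\{w(0),\ldots,w(n-1)\}$ with $w(i)$ the least element of $S$ congruent to $i$ modulo $n$. $S$ is a MANS-semigroup if $w(1)<w(2)<\cdots<w(\mathrm{m}(S)-1)$ for the elements $w(i)$ of $\mathrm{Ap}(S,\mathrm{m}(S))$. $a\bmod b$ is the remainder of the division of $a$ by $b$. *)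

theory Defs
  imports Main
begin

inductive_set gen :: "nat set \<Rightarrow> nat set" for A :: "nat set" where
  gen_zero: "0 \<in> gen A"
| gen_add: "a \<in> A \<Longrightarrow> x \<in> gen A \<Longrightarrow> a + x \<in> gen A"

definition numerical_semigroup :: "nat set \<Rightarrow> bool" where
  "numerical_semigroup S \<longleftrightarrow> 0 \<in> S \<and> (\<forall>a\<in>S. \<forall>b\<in>S. a + b \<in> S) \<and> finite (UNIV - S)"

definition msg :: "nat set \<Rightarrow> nat set" where
  "msg S = (THE A. gen A = S \<and> (\<forall>B. B \<subset> A \<longrightarrow> gen B \<noteq> S))"

definition multiplicity :: "nat set \<Rightarrow> nat" where
  "multiplicity S = (LEAST x. x \<in> S \<and> x \<noteq> 0)"

definition apery_w :: "nat set \<Rightarrow> nat \<Rightarrow> nat \<Rightarrow> nat" where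
  "apery_w S n i = (LEAST s. s \<in> S \<and> s mod n = i mod n)"

definition Apery :: "nat set \<Rightarrow> nat \<Rightarrow> nat set" where
  "Apery S n = {s \<in> S. \<not> (n \<le> s \<and> s - n \<in> S)}"

definition MANS :: "nat set \<Rightarrow> bool" where
  "MANS S \<longleftrightarrow> numerical_semigroup S \<and>
     (\<forall>i j. 1 \<le> i \<longrightarrow> i < j \<longrightarrow> j \<le> multiplicity S - 1 \<longrightarrow>
        apery_w S (multiplicity S) i < apery_w S (multiplicity S) j)"

end

theory Submission
  imports Defs
begin

text \<open>
  Let \<open>m = n\<^sub>1\<close> and \<open>a = n\<^bsub>e+1\<^esub>\<close>. For a numerical semigroup \<open>T\<close> of multiplicity
  \<open>m\<close>, the MANS property \<open>w(i - 1) < w(i)\<close> (\<open>2 \<le> i < m\<close>) is equivalent to a descent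
  condition: every \<open>s \<in> T\<close> with \<open>s \<not>\<equiv> 0\<close> has some \<open>t \<in> T\<close>, \<open>t < s\<close>, with
  \<open>t + 1 \<equiv> s (mod m)\<close>. This condition is additive, so it suffices to check it on generators.
  Below \<open>a\<close> the semigroups \<open>S\<close> and \<open>S'\<close> coincide, and every generator \<open>g \<noteq> m\<close> of \<open>S\<close> is its own
  Apery element \<open>w(g mod m)\<close>. Hence descent for \<open>S\<close> restricts to \<open>S'\<close> (and \<open>w(1) < a\<close> makes
  \<open>S'\<close> numerical), while descent for \<open>S'\<close> extends to \<open>S\<close> exactly when the new generator \<open>a\<close>
  has a descent witness in \<open>S'\<close>, namely \<open>w'(r - 1) < a\<close> for \<open>r = a mod m\<close>. Condition (2) is
  \<open>w(n\<^sub>e mod m) = n\<^sub>e < a = w(r)\<close> read through monotonicity, and \<open>a < w'(r)\<close> holds because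
  \<open>w'(r) \<in> S\<close> is congruent to \<open>a = w(r)\<close> but differs from \<open>a \<notin> S'\<close>.
\<close>

definition submonoid :: "nat set \<Rightarrow> bool" where
  "submonoid S \<longleftrightarrow> 0 \<in> S \<and> (\<forall>a\<in>S. \<forall>b\<in>S. a + b \<in> S)"

lemma numerical_semigroup_iff: "numerical_semigroup S \<longleftrightarrow> submonoid S \<and> finite (UNIV - S)"
  by (auto simp: numerical_semigroup_def submonoid_def)

lemma submonoid_mult_closed: "submonoid S \<Longrightarrow> x \<in> S \<Longrightarrow> k * x \<in> S"
  by (induction k) (auto simp: submonoid_def)

lemma gen_base: "a \<in> A \<Longrightarrow> a \<in> gen A"
  using gen_add[of a A 0] gen_zero by simp

lemma gen_add_closed: "x \<in> gen A \<Longrightarrow> y \<in> gen A \<Longrightarrow> x + y \<in> gen A"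
  by (induction x rule: gen.induct) (auto simp: add.assoc intro: gen.intros)

lemma submonoid_gen: "submonoid (gen A)"
  by (auto simp: submonoid_def intro: gen_zero gen_add_closed)

lemma gen_subset:
  assumes "A \<subseteq> S" "submonoid S"
  shows "gen A \<subseteq> S"
proof
  fix x assume "x \<in> gen A"
  then show "x \<in> S"
    by (induction x rule: gen.induct) (use assms in \<open>auto simp: submonoid_def\<close>)
qed

lemma gen_mono: "A \<subseteq> B \<Longrightarrow> gen A \<subseteq> gen B"
  by (meson gen_base gen_subset order.trans subsetI submonoid_gen)

lemma gen_insert_less: "s \<in> gen (insert a B) \<Longrightarrow> s < a \<Longrightarrow> s \<in> gen B"
  by (induction s rule: gen.induct) (auto intro: gen.intros)

lemma gen_nonzero_ge: "s \<in> gen A \<Longrightarrow> s \<noteq> 0 \<Longrightarrow> \<forall>g\<in>A. m \<le> g \<Longrightarrow> m \<le> s"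
  by (induction s rule: gen.induct) auto

lemma multiplicity_gen:
  assumes "m \<in> A" "m \<noteq> 0" "\<forall>g\<in>A. m \<le> g"
  shows "multiplicity (gen A) = m"
  unfolding multiplicity_def
  by (rule Least_equality) (use assms gen_base gen_nonzero_ge in auto)

definition irreducibles :: "nat set \<Rightarrow> nat set" where
  "irreducibles S = {s \<in> S. s \<noteq> 0 \<and> \<not> (\<exists>x\<in>S. \<exists>y\<in>S. x \<noteq> 0 \<and> y \<noteq> 0 \<and> s = x + y)}"

lemma gen_irreducibles:
  assumes "submonoid S"
  shows "gen (irreducibles S) = S"
proof
  show "gen (irreducibles S) \<subseteq> S"
    using assms by (intro gen_subset) (auto simp: irreducibles_def)
  have "s \<in> gen (irreducibles S)" if "s \<in> S" for s
    using that
  proof (induction s rule: less_induct)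
    case (less s)
    show ?case
    proof (cases "s = 0 \<or> s \<in> irreducibles S")
      case True
      then show ?thesis using gen_base gen_zero by blast
    next
      case False
      then obtain x y where "x \<in> S" "y \<in> S" "x \<noteq> 0" "y \<noteq> 0" "s = x + y"
        using less.prems by (auto simp: irreducibles_def)
      then show ?thesis using less.IH[of x] less.IH[of y] gen_add_closed by simp
    qed
  qed
  then show "S \<subseteq> gen (irreducibles S)" by blast
qed

lemma irreducible_mem_gen_imp_mem:
  assumes "submonoid S" "B \<subseteq> S" "y \<in> gen B" "y \<in> irreducibles S"
  shows "y \<in> B"
  using assms(3,4)
proof (induction y rule: gen.induct)
  case gen_zero
  then show ?case by (simp add: irreducibles_def)
next
  case (gen_add b x)
  have "b \<in> S" "x \<in> S"
    using gen_add.hyps assms(1,2) gen_subset by auto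
  then have "b = 0 \<or> x = 0"
    using gen_add.prems by (auto simp: irreducibles_def)
  then show ?case using gen_add by auto
qed

lemma msg_eq_irreducibles:
  assumes "submonoid S"
  shows "msg S = irreducibles S"
  unfolding msg_def
proof (rule the_equality)
  have irr_subset: "irreducibles S \<subseteq> B" if "B \<subseteq> S" "gen B = S" for B
    using irreducible_mem_gen_imp_mem[OF assms that(1)] that(2) by (auto simp: irreducibles_def)
  show "gen (irreducibles S) = S \<and> (\<forall>B. B \<subset> irreducibles S \<longrightarrow> gen B \<noteq> S)"
    using gen_irreducibles[OF assms] irr_subset by (auto simp: irreducibles_def)
  fix A assume A: "gen A = S \<and> (\<forall>B. B \<subset> A \<longrightarrow> gen B \<noteq> S)"
  then have "irreducibles S \<subseteq> A"
    using irr_subset gen_base by blast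
  then show "A = irreducibles S"
    using A gen_irreducibles[OF assms] by blast
qed

lemma numerical_semigroup_ex_mod_eq:
  assumes "numerical_semigroup T" "0 < m"
  shows "\<exists>s\<in>T. s mod m = i mod m"
proof -
  obtain N where N: "\<forall>x\<in>UNIV - T. x < N"
    using assms(1) finite_nat_set_iff_bounded by (auto simp: numerical_semigroup_def)
  have "N \<le> N * m + i mod m"
    using assms(2) by (simp add: trans_le_add1)
  then have "N * m + i mod m \<in> T"
    using N by (meson DiffI UNIV_I not_le)
  then show ?thesis by (intro bexI) auto
qed

lemma multiplicity_pos:
  assumes "numerical_semigroup T"
  shows "0 < multiplicity T"
proof -
  have "\<exists>s\<in>T. s mod 2 = 1 mod (2::nat)"
    by (rule numerical_semigroup_ex_mod_eq[OF assms]) simp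
  then obtain s where s: "s \<in> T" "s mod 2 = 1 mod (2::nat)" ..
  then have "s \<noteq> 0" by auto
  then have "multiplicity T \<in> T \<and> multiplicity T \<noteq> 0"
    unfolding multiplicity_def using s(1) by (intro LeastI[of "\<lambda>x. x \<in> T \<and> x \<noteq> 0" s]) simp
  then show ?thesis by simp
qed

lemma apery_w_mod: "apery_w T m (i mod m) = apery_w T m i"
  by (simp add: apery_w_def)

lemma apery_w_le: "s \<in> T \<Longrightarrow> s mod m = i mod m \<Longrightarrow> apery_w T m i \<le> s"
  unfolding apery_w_def by (rule Least_le) simp

lemma apery_w_zero: "0 \<in> T \<Longrightarrow> apery_w T m 0 = 0"
  using apery_w_le[of 0 T m 0] by simp

lemma apery_w_mem_mod_eq:
  assumes "\<exists>s\<in>T. s mod m = i mod m"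
  shows "apery_w T m i \<in> T" "apery_w T m i mod m = i mod m"
  using LeastI_ex[of "\<lambda>s. s \<in> T \<and> s mod m = i mod m"] assms
  by (auto simp: apery_w_def)

lemma numerical_semigroup_apery_w:
  assumes "numerical_semigroup T" "0 < m"
  shows "apery_w T m i \<in> T" "apery_w T m i mod m = i mod m"
  using apery_w_mem_mod_eq[OF numerical_semigroup_ex_mod_eq[OF assms]] by auto

lemma apery_w_Apery:
  assumes "submonoid T" "m \<in> T" "s \<in> Apery T m"
  shows "apery_w T m s = s"
proof (rule ccontr)
  let ?w = "apery_w T m s"
  have s: "s \<in> T" "\<not> (m \<le> s \<and> s - m \<in> T)"
    using assms(3) by (auto simp: Apery_def)
  have w: "?w \<in> T" "?w mod m = s mod m"
    using apery_w_mem_mod_eq[of T m s] s(1) by auto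
  assume "?w \<noteq> s"
  then have "?w < s" using apery_w_le[OF s(1)] le_neq_implies_less by blast
  moreover have "m dvd s - ?w"
    using mod_eq_dvd_iff_nat[of ?w s m] w(2) \<open>?w < s\<close> by simp
  then obtain q where q: "s - ?w = m * q" by (elim dvdE)
  then have "q \<noteq> 0" using \<open>?w < s\<close> by (cases q) auto
  then obtain k where "s - ?w = m * Suc k" using q not0_implies_Suc by blast
  then have "m \<le> s" "s - m = ?w + k * m"
    using \<open>?w < s\<close> by (simp_all add: algebra_simps)
  moreover have "?w + k * m \<in> T"
    using assms(1,2) w(1) submonoid_mult_closed by (auto simp: submonoid_def)
  ultimately show False using s(2) by simp
qed

lemma irreducible_mem_Apery:
  assumes "g \<in> irreducibles T" "m \<in> T" "m \<noteq> 0" "g \<noteq> m"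
  shows "g \<in> Apery T m"
proof -
  have "\<not> (m \<le> g \<and> g - m \<in> T)"
  proof
    assume "m \<le> g \<and> g - m \<in> T"
    then have "\<exists>x\<in>T. \<exists>y\<in>T. x \<noteq> 0 \<and> y \<noteq> 0 \<and> g = x + y"
      using assms(2-4) by (intro bexI[of _ m] bexI[of _ "g - m"]) auto
    then show False using assms(1) unfolding irreducibles_def by blast
  qed
  then show ?thesis using assms(1) by (simp add: Apery_def irreducibles_def)
qed

lemma numerical_semigroup_if_mod_eq_1:
  assumes "submonoid T" "m \<in> T" "x \<in> T" "x mod m = 1"
  shows "numerical_semigroup T"
proof -
  have "y \<in> T" if "m * x \<le> y" for y
  proof -
    let ?i = "y mod m"
    have le: "?i * x \<le> y"
    proof (cases "m = 0")
      case False
      then show ?thesis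
        using that by (meson le_trans less_imp_le_nat mod_less_divisor mult_le_mono1 not_gr0)
    qed (use assms(4) in simp)
    have "(?i * x) mod m = (?i * (x mod m)) mod m"
      by (simp add: mod_mult_right_eq)
    also have "\<dots> = y mod m"
      using assms(4) by simp
    finally have "m dvd y - ?i * x"
      using mod_eq_dvd_iff_nat[OF le, of m] by simp
    then obtain k where "y - ?i * x = m * k" by (elim dvdE)
    then have "y = ?i * x + k * m"
      using le by (simp add: mult.commute)
    moreover have "?i * x \<in> T" "k * m \<in> T"
      using assms submonoid_mult_closed by auto
    ultimately show ?thesis using assms(1) unfolding submonoid_def by metis
  qed
  then have "UNIV - T \<subseteq> {..< m * x}" by (auto simp: not_le[symmetric])
  then show ?thesis
    using assms(1) finite_subset by (auto simp: numerical_semigroup_iff)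
qed

section \<open>MANS semigroups as a descent condition\<close>

lemma strict_mono_on_atLeastAtMost_Suc:
  fixes f :: "nat \<Rightarrow> 'a::order"
  assumes "\<And>k. a \<le> k \<Longrightarrow> k < b \<Longrightarrow> f k < f (Suc k)"
  shows "strict_mono_on {a..b} f"
proof (rule strict_mono_onI)
  fix i j assume "i \<in> {a..b}" "j \<in> {a..b}" "i < j"
  then show "f i < f j"
  proof (induction j)
    case 0
    then show ?case by simp
  next
    case (Suc j)
    then have "f j < f (Suc j)" using assms by simp
    moreover have "i < j \<Longrightarrow> f i < f j" using Suc by simp
    ultimately show ?case using Suc.prems(3) by (cases "i = j") auto
  qed
qed

lemma MANS_iff_strict_mono_on:
  "MANS T \<longleftrightarrow> numerical_semigroup T \<and>
     strict_mono_on {1..multiplicity T - 1} (apery_w T (multiplicity T))"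
  by (auto simp: MANS_def strict_mono_on_def)

definition residue_descent :: "nat set \<Rightarrow> nat \<Rightarrow> bool" where
  "residue_descent T m \<longleftrightarrow>
     (\<forall>s\<in>T. s mod m \<noteq> 0 \<longrightarrow> (\<exists>t\<in>T. t < s \<and> Suc t mod m = s mod m))"

lemma residue_descent_gen:
  assumes "\<And>g. g \<in> A \<Longrightarrow> g mod m \<noteq> 0 \<Longrightarrow> \<exists>t\<in>gen A. t < g \<and> Suc t mod m = g mod m"
  shows "residue_descent (gen A) m"
  unfolding residue_descent_def
proof
  fix s assume "s \<in> gen A"
  then show "s mod m \<noteq> 0 \<longrightarrow> (\<exists>t\<in>gen A. t < s \<and> Suc t mod m = s mod m)"
  proof (induction s rule: gen.induct)
    case gen_zero
    then show ?case by simp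
  next
    case (gen_add g x)
    show ?case
    proof
      assume nonzero: "(g + x) mod m \<noteq> 0"
      show "\<exists>t\<in>gen A. t < g + x \<and> Suc t mod m = (g + x) mod m"
      proof (cases "g mod m = 0")
        case True
        then have "(g + x) mod m = x mod m"
          using mod_add_cong[of g m 0 x x] by simp
        then obtain t where t: "t \<in> gen A" "t < x" "Suc t mod m = x mod m"
          using gen_add.IH nonzero by auto
        then have "Suc (g + t) mod m = (g + x) mod m"
          using mod_add_cong[of g m g "Suc t" x] by simp
        then show ?thesis
          using t gen_add.hyps(1) by (auto intro!: bexI[of _ "g + t"] gen.gen_add)
      next
        case False
        then obtain t where t: "t \<in> gen A" "t < g" "Suc t mod m = g mod m"
          using assms gen_add.hyps(1) by blast
        then have "Suc (t + x) mod m = (g + x) mod m"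
          using mod_add_cong[of "Suc t" m g x x] by simp
        then show ?thesis
          using t gen_add.hyps(2) gen_add_closed by (auto intro!: bexI[of _ "t + x"])
      qed
    qed
  qed
qed

lemma MANS_iff_residue_descent:
  assumes T: "numerical_semigroup T"
  shows "MANS T \<longleftrightarrow> residue_descent T (multiplicity T)"
proof -
  define m where "m = multiplicity T"
  let ?w = "apery_w T m"
  have m: "0 < m" using multiplicity_pos[OF T] by (simp add: m_def)
  note w = numerical_semigroup_apery_w[OF T m]
  have "strict_mono_on {1..m - 1} ?w \<longleftrightarrow> residue_descent T m"
  proof
    assume mono: "strict_mono_on {1..m - 1} ?w"
    show "residue_descent T m"
      unfolding residue_descent_def
    proof (intro ballI impI)
      fix s assume s: "s \<in> T" "s mod m \<noteq> 0"
      define c where "c = s mod m"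
      have c: "1 \<le> c" "c < m" using s(2) m by (auto simp: c_def)
      have "0 < s" using s(2) by (cases s) auto
      show "\<exists>t\<in>T. t < s \<and> Suc t mod m = s mod m"
      proof (cases "c = 1")
        case True
        then show ?thesis
          using s c T \<open>0 < s\<close> by (intro bexI[of _ 0]) (auto simp: c_def numerical_semigroup_def)
      next
        case False
        have "?w (c - 1) < ?w c"
          using strict_mono_onD[OF mono] c False by simp
        also have "?w c \<le> s"
          using apery_w_le[OF s(1)] by (simp add: c_def)
        finally have "?w (c - 1) < s" .
        moreover have "Suc (?w (c - 1)) mod m = s mod m"
          using w(2)[of "c - 1"] c by (simp add: mod_Suc c_def)
        ultimately show ?thesis using w(1) by blast
      qed
    qed
  next
    assume descent: "residue_descent T m"
    show "strict_mono_on {1..m - 1} ?w"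
    proof (rule strict_mono_on_atLeastAtMost_Suc)
      fix k assume k: "1 \<le> k" "k < m - 1"
      then have "?w (Suc k) mod m = Suc k" using w(2)[of "Suc k"] by simp
      then obtain t where t: "t \<in> T" "t < ?w (Suc k)" "Suc t mod m = Suc k"
        using descent w(1) unfolding residue_descent_def by (metis nat.distinct(1))
      then have "t mod m = k mod m"
        using k by (simp add: mod_Suc split: if_splits)
      then have "?w k \<le> t" by (rule apery_w_le[OF t(1)])
      then show "?w k < ?w (Suc k)" using t(2) by simp
    qed
  qed
  then show ?thesis using T by (simp add: MANS_iff_strict_mono_on m_def)
qed

section \<open>Adjoining a largest minimal generator\<close>

locale enumerated_msg =
  fixes S :: "nat set" and n :: "nat \<Rightarrow> nat" and e :: nat
  assumes numerical_semigroup_S: "numerical_semigroup S"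
    and two_le_e: "e \<ge> 2"
    and strict_mono: "strict_mono_on {1..e+1} n"
    and msg_S: "msg S = n ` {1..e+1}"
begin

abbreviation S' :: "nat set" where
  "S' \<equiv> gen (n ` {1..e})"

lemma submonoid_S: "submonoid S"
  using numerical_semigroup_S by (simp add: numerical_semigroup_iff)

lemma irreducibles_eq: "irreducibles S = n ` {1..e+1}"
  using msg_S msg_eq_irreducibles[OF submonoid_S] by simp

lemma gen_eq: "gen (n ` {1..e+1}) = S"
  using gen_irreducibles[OF submonoid_S] irreducibles_eq by simp

lemma generators_subset: "n ` {1..e+1} \<subseteq> S"
  using irreducibles_eq by (auto simp: irreducibles_def)

lemma generators_eq_insert_last: "n ` {1..e+1} = insert (n (e+1)) (n ` {1..e})"
  by (simp add: atLeastAtMostSuc_conv)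

lemma n_less: "1 \<le> i \<Longrightarrow> i < j \<Longrightarrow> j \<le> e+1 \<Longrightarrow> n i < n j"
  using strict_mono_onD[OF strict_mono] by simp

lemma n_first_le: "i \<in> {1..e+1} \<Longrightarrow> n 1 \<le> n i"
  using n_less[of 1 i] by (cases "i = 1") auto

lemma n_first_pos: "0 < n 1"
proof -
  have "n 1 \<in> irreducibles S" using irreducibles_eq by simp
  then show ?thesis by (simp add: irreducibles_def)
qed

lemma multiplicity_S: "multiplicity S = n 1"
  using multiplicity_gen[of "n 1" "n ` {1..e+1}"] gen_eq n_first_le n_first_pos by simp

lemma multiplicity_S': "multiplicity S' = n 1"
  using multiplicity_gen[of "n 1" "n ` {1..e}"] n_first_le n_first_pos two_le_e by simp

lemma S'_subset: "S' \<subseteq> S"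
proof -
  have "n ` {1..e} \<subseteq> n ` {1..e+1}" by auto
  then show ?thesis using gen_mono gen_eq by blast
qed

lemma mem_S'_if_less_last: "s \<in> S \<Longrightarrow> s < n (e+1) \<Longrightarrow> s \<in> S'"
  using gen_insert_less[of s "n (e+1)" "n ` {1..e}"] gen_eq generators_eq_insert_last by simp

lemma last_notin_S': "n (e+1) \<notin> S'"
proof
  assume "n (e+1) \<in> S'"
  moreover have "n ` {1..e} \<subseteq> S" "n (e+1) \<in> irreducibles S"
    using generators_subset irreducibles_eq by auto
  ultimately have "n (e+1) \<in> n ` {1..e}"
    using irreducible_mem_gen_imp_mem[OF submonoid_S] by blast
  then show False using n_less[of _ "e+1"] by force
qed

lemma apery_w_generator:
  assumes "i \<in> {2..e+1}"
  shows "apery_w S (n 1) (n i mod n 1) = n i" "n i mod n 1 \<noteq> 0"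
proof -
  have "n i \<in> irreducibles S" "n 1 \<in> S" "n i \<noteq> n 1"
    using assms irreducibles_eq generators_subset n_less[of 1 i] by auto
  then have "n i \<in> Apery S (n 1)"
    using irreducible_mem_Apery n_first_pos by simp
  then show w: "apery_w S (n 1) (n i mod n 1) = n i"
    using apery_w_Apery[OF submonoid_S \<open>n 1 \<in> S\<close>] by (simp add: apery_w_mod)
  show "n i mod n 1 \<noteq> 0"
  proof
    assume "n i mod n 1 = 0"
    then have "n i = 0" using w apery_w_zero submonoid_S by (simp add: submonoid_def)
    then show False using \<open>n i \<in> irreducibles S\<close> by (simp add: irreducibles_def)
  qed
qed

lemma last_less_apery_w_S':
  assumes "numerical_semigroup S'"
  shows "n (e+1) < apery_w S' (n 1) (n (e+1) mod n 1)"
proof -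
  let ?x = "apery_w S' (n 1) (n (e+1) mod n 1)"
  have x: "?x \<in> S'" "?x mod n 1 = n (e+1) mod n 1"
    using numerical_semigroup_apery_w[OF assms n_first_pos] by auto
  have "apery_w S (n 1) (n (e+1) mod n 1) \<le> ?x"
    using apery_w_le x S'_subset by auto
  then have "n (e+1) \<le> ?x"
    using apery_w_generator(1)[of "e+1"] two_le_e by simp
  moreover have "n (e+1) \<noteq> ?x"
    using x last_notin_S' by auto
  ultimately show ?thesis by simp
qed

lemma residue_descent_S'_if_S:
  assumes "residue_descent S (n 1)"
  shows "residue_descent S' (n 1)"
proof (rule residue_descent_gen)
  fix g assume g: "g \<in> n ` {1..e}" "g mod n 1 \<noteq> 0"
  then have "g \<in> S" "g < n (e+1)"
    using generators_subset n_less by auto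
  then obtain t where "t \<in> S" "t < g" "Suc t mod n 1 = g mod n 1"
    using assms g(2) unfolding residue_descent_def by blast
  then show "\<exists>t\<in>S'. t < g \<and> Suc t mod n 1 = g mod n 1"
    using mem_S'_if_less_last \<open>g < n (e+1)\<close> by (meson order.strict_trans)
qed

lemma residue_descent_S_if_S':
  assumes "residue_descent S' (n 1)"
    and "t \<in> S'" "t < n (e+1)" "Suc t mod n 1 = n (e+1) mod n 1"
  shows "residue_descent S (n 1)"
proof -
  have "residue_descent (gen (n ` {1..e+1})) (n 1)"
  proof (rule residue_descent_gen)
    fix g assume g: "g \<in> n ` {1..e+1}" "g mod n 1 \<noteq> 0"
    show "\<exists>t\<in>gen (n ` {1..e+1}). t < g \<and> Suc t mod n 1 = g mod n 1"
    proof (cases "g = n (e+1)")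
      case True
      then show ?thesis using assms(2-4) S'_subset gen_eq by auto
    next
      case False
      then have "g \<in> S'" using g(1) generators_eq_insert_last gen_base by auto
      then show ?thesis
        using assms(1) g(2) S'_subset gen_eq unfolding residue_descent_def by blast
    qed
  qed
  then show ?thesis using gen_eq by simp
qed

lemma MANS_imp_conditions:
  assumes "MANS S"
  shows "MANS S' \<and> n e mod n 1 < n (e+1) mod n 1 \<and>
    apery_w S' (n 1) (n (e+1) mod n 1 - 1) < n (e+1) \<and>
    n (e+1) < apery_w S' (n 1) (n (e+1) mod n 1)"
proof -
  let ?w = "apery_w S (n 1)"
  define c r where "c = n e mod n 1" and "r = n (e+1) mod n 1"
  have mono: "strict_mono_on {1..n 1 - 1} ?w"
    using assms by (simp add: MANS_iff_strict_mono_on multiplicity_S)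
  have w_c: "?w c = n e" and w_r: "?w r = n (e+1)"
    using apery_w_generator(1)[of e] apery_w_generator(1)[of "e+1"] two_le_e
    by (simp_all add: c_def r_def)
  have c: "c \<in> {1..n 1 - 1}" and r: "r \<in> {1..n 1 - 1}"
    using apery_w_generator(2)[of e] apery_w_generator(2)[of "e+1"] two_le_e n_first_pos
    by (auto simp: c_def r_def less_Suc_eq_le[symmetric])
  have "c < r"
    using strict_mono_on_less[OF mono c r] w_c w_r n_less[of e "e+1"] two_le_e by simp
  have w_below: "?w i \<in> S' \<and> ?w i mod n 1 = i" "?w i < n (e+1)" if "1 \<le> i" "i < r" for i
  proof -
    show "?w i < n (e+1)"
      using strict_mono_onD[OF mono, of i r] that r w_r by simp
    then show "?w i \<in> S' \<and> ?w i mod n 1 = i"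
      using numerical_semigroup_apery_w[OF numerical_semigroup_S n_first_pos, of i]
        mem_S'_if_less_last that r by simp
  qed
  have "n 1 \<in> S'" using gen_base two_le_e by simp
  moreover have "?w 1 \<in> S'" "?w 1 mod n 1 = 1"
    using w_below(1)[of 1] \<open>c < r\<close> c by auto
  ultimately have S': "numerical_semigroup S'"
    by (rule numerical_semigroup_if_mod_eq_1[OF submonoid_gen])
  have "MANS S'"
    using assms residue_descent_S'_if_S
      MANS_iff_residue_descent[OF S', unfolded multiplicity_S']
      MANS_iff_residue_descent[OF numerical_semigroup_S, unfolded multiplicity_S]
    by blast
  moreover have "apery_w S' (n 1) (r - 1) < n (e+1)"
    using apery_w_le[of "?w (r - 1)" S' "n 1" "r - 1"] w_below[of "r - 1"] \<open>c < r\<close> c r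
    by fastforce
  ultimately show ?thesis
    using last_less_apery_w_S'[OF S'] \<open>c < r\<close> by (simp add: c_def r_def)
qed

lemma MANS_if_conditions:
  assumes "MANS S'" "apery_w S' (n 1) (n (e+1) mod n 1 - 1) < n (e+1)"
  shows "MANS S"
proof -
  define r where "r = n (e+1) mod n 1"
  let ?t = "apery_w S' (n 1) (r - 1)"
  have S': "numerical_semigroup S'" using assms(1) by (simp add: MANS_def)
  have r: "r \<noteq> 0" "r < n 1"
    using apery_w_generator(2)[of "e+1"] two_le_e n_first_pos by (auto simp: r_def)
  have t: "?t \<in> S'" "?t mod n 1 = r - 1"
    using numerical_semigroup_apery_w[OF S' n_first_pos, of "r - 1"] r by auto
  then have "Suc ?t mod n 1 = n (e+1) mod n 1"
    using r by (simp add: mod_Suc r_def)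
  moreover have "residue_descent S' (n 1)"
    using assms(1) MANS_iff_residue_descent[OF S', unfolded multiplicity_S'] by blast
  ultimately have "residue_descent S (n 1)"
    using residue_descent_S_if_S' t(1) assms(2) by (simp add: r_def)
  then show ?thesis
    using MANS_iff_residue_descent[OF numerical_semigroup_S, unfolded multiplicity_S] by blast
qed

end

theorem theorem4p4:
  fixes S :: "nat set" and n :: "nat \<Rightarrow> nat" and e :: nat
  assumes "numerical_semigroup S"
    and "e \<ge> 2"
    and "strict_mono_on {1..e+1} n"
    and "msg S = n ` {1..e+1}"
  shows "MANS S \<longleftrightarrow>
     (MANS (gen (n ` {1..e})) \<and>
      n e mod n 1 < n (e+1) mod n 1 \<and>
      apery_w (gen (n ` {1..e})) (n 1) (n (e+1) mod n 1 - 1) < n (e+1) \<and>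
      n (e+1) < apery_w (gen (n ` {1..e})) (n 1) (n (e+1) mod n 1))"
proof -
  interpret enumerated_msg S n e
    using assms by unfold_locales
  show ?thesis
    using MANS_imp_conditions MANS_if_conditions by blast
qed

end
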